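(* Let $(C,\underline w)$ be a polarized nodal curve, let $(r,d,k)$ be a type with $k<r$, and fix $M>0$. Then there are only finitely many critical values in $(0,M)$ for coherent systems of type $(r,d,k)$, say $0<\alpha_1<\dots<\alpha_{i_M}<M$. Moreover, within each of the intervals $(0,\alpha_1)$, $(\alpha_i,\alpha_{i+1})$ and $(\alpha_{i_M},M)$, the property of $(\underline w,\alpha)$-stability of a coherent system of type $(r,d,k)$ is independent of $\alpha$.
   Context: $C$ is a connected reduced projective curve over $\mathbb{C}$ with only nodes, irreducible components $C_i$ smooth of genus $g_i\ge2$. A polarization $\underline{w}\in\mathbb{Q}^\gamma$ has $0<w_i<1$, $\sum w_i=1$. Depth one sheaf: coherent, pure of dimension one; $E_i=(E\otimes\mathcal{O}_{C_i})/\mathrm{torsion}$; $\mathrm{rk}_{\underline w}(E)=\sum w_i\mathrm{rk}(E_i)$; $\deg_{\underline w}(E)=\chi(E)-\mathrm{rk}_{\underline w}(E)\chi(\mathcal{O}_C)$; $\mu_{\underline w}=\deg_{\underline w}/\mathrm{rk}_{\underline w}$. Coherent system $(E,V)$: $E$ depth one, $V\subseteq H^0(E)$; type $(r,d,k)$: $\mathrm{rk}_{\underline w}E=r$, $\deg_{\underline w}E=d$, $\dim V=k$ ($r,d$ rational, $r>0$, $k\in\mathbb{N}$). Subsystem $(F,U)$: $F\subseteq E$, $U\subseteq V\cap H^0(F)$, proper if $\ne(0,0),(E,V)$. $\mu_{\underline w,\alpha}(E,V)=\mu_{\underline w}(E)+\alpha\dim V/\mathrm{rk}_{\underline w}E$;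 $(\underline w,\alpha)$-stable: $\mu_{\underline w,\alpha}(F,U)<\mu_{\underline w,\alpha}(E,V)$ for every proper subsystem. A value $\alpha>0$ is a critical value for coherent systems of type $(r,d,k)$ if it is numerically possible to have a proper subsystem $(F,W)$ of a coherent system $(E,V)$ of type $(r,d,k)$ with $\mu_{\underline w,\alpha}(F,W)=\mu_{\underline w,\alpha}(E,V)$ and $\mu_{\underline w}(F)\neq\mu_{\underline w}(E)$; i.e. $\alpha=\frac{rd'-r'd}{r'k-rk'}$ with $rk'\ne r'k$, where $k'\in\{0,\dots,k\}$, $r'=\sum_iw_ir_i'$ with integers $0\le r'_i\le r_i$ ($(r_i)$ a possible multirank), and $d'+r'\chi(\mathcal{O}_C)\in\mathbb{Z}$. *)

theory Defs
  imports Complex_Main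
begin

text \<open>Numerical data of a polarized nodal curve: gam = number of irreducible components
  (indexed by 0..gam-1), w = polarization, chi = chi(O_C) (an integer).\<close>

definition polarization :: "nat \<Rightarrow> (nat \<Rightarrow> real) \<Rightarrow> bool" where
  "polarization gam w \<longleftrightarrow> gam \<ge> 1 \<and>
     (\<forall>i<gam. w i \<in> \<rat> \<and> 0 < w i \<and> w i < 1) \<and> (\<Sum>i<gam. w i) = 1"

definition wrank :: "nat \<Rightarrow> (nat \<Rightarrow> real) \<Rightarrow> (nat \<Rightarrow> nat) \<Rightarrow> real" where
  "wrank gam w ri = (\<Sum>i<gam. w i * real (ri i))"

definition critical_value ::
  "nat \<Rightarrow> (nat \<Rightarrow> real) \<Rightarrow> int \<Rightarrow> real \<Rightarrow> real \<Rightarrow> nat \<Rightarrow> real \<Rightarrow> bool" where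
  "critical_value gam w chi r d k \<alpha> \<longleftrightarrow> \<alpha> > 0 \<and>
     (\<exists>ri ri' k' d'. wrank gam w ri = r \<and> (\<forall>i<gam. ri' i \<le> ri i) \<and> k' \<le> k \<and>
        d' + wrank gam w ri' * of_int chi \<in> \<int> \<and>
        r * real k' \<noteq> wrank gam w ri' * real k \<and>
        \<alpha> = (r * d' - wrank gam w ri' * d) / (wrank gam w ri' * real k - r * real k'))"

text \<open>Numerical constraints satisfied by the invariants (rk_w F, deg_w F, dim U) of a proper
  subsystem (F,U) of a coherent system whose underlying sheaf has multirank ri and dim V = k.\<close>
definition subsystem_type_ok ::
  "nat \<Rightarrow> (nat \<Rightarrow> real) \<Rightarrow> int \<Rightarrow> (nat \<Rightarrow> nat) \<Rightarrow> nat \<Rightarrow> real \<times> real \<times> nat \<Rightarrow> bool" where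
  "subsystem_type_ok gam w chi ri k t \<longleftrightarrow>
     (case t of (r', d', k') \<Rightarrow>
       (\<exists>ri'. (\<forall>i<gam. ri' i \<le> ri i) \<and> (\<exists>i<gam. 0 < ri' i) \<and> r' = wrank gam w ri' \<and>
              d' + r' * of_int chi \<in> \<int> \<and> k' \<le> k))"

text \<open>Abstract coherent system of type (r,d,k): a multirank ri of the underlying sheaf and the
  set S of numerical types of all its proper subsystems.\<close>
definition coh_sys_data ::
  "nat \<Rightarrow> (nat \<Rightarrow> real) \<Rightarrow> int \<Rightarrow> real \<Rightarrow> real \<Rightarrow> nat \<Rightarrow> (nat \<Rightarrow> nat) \<Rightarrow> (real \<times> real \<times> nat) set \<Rightarrow> bool" where
  "coh_sys_data gam w chi r d k ri S \<longleftrightarrow> wrank gam w ri = r \<and> d + r * of_int chi \<in> \<int> \<and>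
     (\<forall>t\<in>S. subsystem_type_ok gam w chi ri k t)"

definition mu_alpha :: "real \<Rightarrow> real \<Rightarrow> nat \<Rightarrow> real \<Rightarrow> real" where
  "mu_alpha r d k \<alpha> = d / r + \<alpha> * real k / r"

definition stable_alpha :: "real \<Rightarrow> real \<Rightarrow> nat \<Rightarrow> (real \<times> real \<times> nat) set \<Rightarrow> real \<Rightarrow> bool" where
  "stable_alpha r d k S \<alpha> \<longleftrightarrow> (\<forall>(r', d', k')\<in>S. mu_alpha r' d' k' \<alpha> < mu_alpha r d k \<alpha>)"

end

theory Submission
  imports Defs "HOL-Library.FuncSet"
begin

(* Since the weights are positive, the multirank of E, and hence that of any subsheaf F, is
   bounded, so the w-rank r' of F takes only finitely many values; and d' ranges over a
   translate of the integers. For fixed (r', k') the critical values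
   (r d' - r' d) / (r' k - r k') therefore form an arithmetic progression, of which only
   finitely many terms lie in (0, M).
   After clearing the positive denominators, mu_alpha(F,U) < mu_alpha(E,V) says that an
   affine function of alpha is positive. Its sign can only differ at alpha1 and alpha2 if
   its root, a critical value, lies in [alpha1, alpha2]. *)

lemma affine_sign_change_root:
  fixes a b x y :: real
  assumes "x \<le> y" and "(0 < a + x * b) \<noteq> (0 < a + y * b)"
  shows "b \<noteq> 0" and "- a / b \<in> {x..y}"
proof -
  show "b \<noteq> 0" using assms(2) by auto
  then consider "0 < b" | "b < 0" by linarith
  then show "- a / b \<in> {x..y}"
  proof cases
    case 1
    moreover have "x * b \<le> y * b"
      using mult_right_mono[OF assms(1)] 1 by simp
    ultimately have "a + x * b \<le> 0" "0 \<le> a + y * b"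
      using assms(2) by linarith+
    with 1 show ?thesis by (simp add: field_simps)
  next
    case 2
    moreover have "y * b \<le> x * b"
      using mult_right_mono_neg[OF assms(1)] 2 by simp
    ultimately have "a + y * b \<le> 0" "0 \<le> a + x * b"
      using assms(2) by linarith+
    with 2 show ?thesis by (simp add: field_simps)
  qed
qed

lemma finite_bounded_arith_progression:
  fixes p q a b :: real
  assumes "p \<noteq> 0"
  shows "finite {x. a \<le> x \<and> x \<le> b \<and> (\<exists>m::int. x = p * of_int m + q)}"
proof -
  define B where "B = \<lceil>(\<bar>a\<bar> + \<bar>b\<bar> + \<bar>q\<bar>) / \<bar>p\<bar>\<rceil>"
  have "{x. a \<le> x \<and> x \<le> b \<and> (\<exists>m::int. x = p * of_int m + q)} \<subseteq>
      (\<lambda>m. p * of_int m + q) ` {-B..B}"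
  proof clarify
    fix m :: int
    assume "a \<le> p * of_int m + q" and "p * of_int m + q \<le> b"
    then have "\<bar>p\<bar> * \<bar>of_int m\<bar> \<le> \<bar>a\<bar> + \<bar>b\<bar> + \<bar>q\<bar>"
      by (simp add: abs_mult[symmetric])
    then have "\<bar>of_int m\<bar> \<le> (\<bar>a\<bar> + \<bar>b\<bar> + \<bar>q\<bar>) / \<bar>p\<bar>"
      using assms by (simp add: field_simps)
    then have "\<bar>m\<bar> \<le> B"
      unfolding B_def by linarith
    then show "p * of_int m + q \<in> (\<lambda>m. p * of_int m + q) ` {-B..B}"
      by (intro imageI) auto
  qed
  then show ?thesis
    by (rule finite_subset) simp
qed

lemma wrank_term_le:
  assumes "\<forall>i<gam. 0 < w i" and "i < gam"
  shows "w i * real (ri i) \<le> wrank gam w ri"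
  unfolding wrank_def using assms
  by (intro member_le_sum) (auto simp: less_imp_le)

lemma wrank_pos:
  assumes "\<forall>i<gam. 0 < w i" and "i < gam" and "0 < ri i"
  shows "0 < wrank gam w ri"
proof -
  have "0 < w i * real (ri i)"
    using assms by simp
  also have "\<dots> \<le> wrank gam w ri"
    using wrank_term_le[OF assms(1,2)] .
  finally show ?thesis .
qed

lemma multirank_le_wrank_div_weight:
  assumes "\<forall>i<gam. 0 < w i" and "i < gam"
  shows "ri i \<le> nat \<lceil>wrank gam w ri / w i\<rceil>"
proof -
  have "real (ri i) \<le> wrank gam w ri / w i"
    using wrank_term_le[OF assms, of ri] assms by (simp add: field_simps)
  then show ?thesis
    by linarith
qed

lemma finite_wranks_bounded:
  "finite {wrank gam w ri | ri. \<forall>i<gam. ri i \<le> N i}"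
proof -
  have "{wrank gam w ri | ri. \<forall>i<gam. ri i \<le> N i} \<subseteq> wrank gam w ` PiE {..<gam} (\<lambda>i. {..N i})"
  proof clarify
    fix ri assume "\<forall>i<gam. ri i \<le> N i"
    then have "restrict ri {..<gam} \<in> PiE {..<gam} (\<lambda>i. {..N i})" by auto
    moreover have "wrank gam w ri = wrank gam w (restrict ri {..<gam})"
      unfolding wrank_def by simp
    ultimately show "wrank gam w ri \<in> wrank gam w ` PiE {..<gam} (\<lambda>i. {..N i})" by blast
  qed
  then show ?thesis
    by (rule finite_subset) (intro finite_imageI finite_PiE; simp)
qed

lemma mu_alpha_less_iff:
  assumes "0 < r" and "0 < r'"
  shows "mu_alpha r' d' k' \<alpha> < mu_alpha r d k \<alpha> \<longleftrightarrow>
    0 < (r' * d - r * d') + \<alpha> * (r' * real k - r * real k')"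
  using assms by (simp add: mu_alpha_def field_simps)

lemma finite_critical_values_below:
  assumes w_pos: "\<forall>i<gam. 0 < w i" and "0 < r"
  shows "finite {\<alpha>. critical_value gam w chi r d k \<alpha> \<and> \<alpha> < M}"
proof -
  define R where "R = {wrank gam w ri' | ri'. \<forall>i<gam. ri' i \<le> nat \<lceil>r / w i\<rceil>}"
  define D where "D r' k' = r' * real k - r * real k'" for r' k'
  define q where "q r' k' = - (r * r' * of_int chi + r' * d) / D r' k'" for r' k'
  define P where "P r' k' = {\<alpha>. 0 \<le> \<alpha> \<and> \<alpha> \<le> M \<and> (\<exists>m::int. \<alpha> = r / D r' k' * of_int m + q r' k')}"
    for r' k'
  have "{\<alpha>. critical_value gam w chi r d k \<alpha> \<and> \<alpha> < M} \<subseteq>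
      (\<Union>r'\<in>R. \<Union>k'\<in>{k'. k' \<le> k \<and> D r' k' \<noteq> 0}. P r' k')"
  proof
    fix \<alpha> assume "\<alpha> \<in> {\<alpha>. critical_value gam w chi r d k \<alpha> \<and> \<alpha> < M}"
    then have "\<alpha> < M" and "critical_value gam w chi r d k \<alpha>"
      by simp_all
    then obtain ri ri' k' d' where "0 < \<alpha>" and ri: "wrank gam w ri = r"
      and ri': "\<forall>i<gam. ri' i \<le> ri i" and "k' \<le> k"
      and "d' + wrank gam w ri' * of_int chi \<in> \<int>"
      and "r * real k' \<noteq> wrank gam w ri' * real k"
      and \<alpha>: "\<alpha> = (r * d' - wrank gam w ri' * d) / (wrank gam w ri' * real k - r * real k')"
      unfolding critical_value_def by blast
    define r' where "r' = wrank gam w ri'"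
    obtain m :: int where m: "d' + r' * of_int chi = of_int m"
      using \<open>d' + wrank gam w ri' * of_int chi \<in> \<int>\<close> unfolding r'_def by (auto elim: Ints_cases)
    have "ri' i \<le> nat \<lceil>r / w i\<rceil>" if "i < gam" for i
      using ri' multirank_le_wrank_div_weight[OF w_pos that, of ri] ri that by fastforce
    then have "r' \<in> R"
      unfolding R_def r'_def by blast
    moreover have "D r' k' \<noteq> 0"
      using \<open>r * real k' \<noteq> wrank gam w ri' * real k\<close> unfolding D_def r'_def by simp
    moreover have "\<alpha> = r / D r' k' * of_int m + q r' k'"
    proof -
      have "r * d' - r' * d = r * of_int m - (r * r' * of_int chi + r' * d)"
        by (simp add: algebra_simps flip: m)
      then have "\<alpha> = (r * of_int m - (r * r' * of_int chi + r' * d)) / D r' k'"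
        using \<alpha> unfolding D_def r'_def[symmetric] by simp
      then show ?thesis
        unfolding q_def by (simp add: diff_divide_distrib add_divide_distrib)
    qed
    ultimately show "\<alpha> \<in> (\<Union>r'\<in>R. \<Union>k'\<in>{k'. k' \<le> k \<and> D r' k' \<noteq> 0}. P r' k')"
      using \<open>0 < \<alpha>\<close> \<open>\<alpha> < M\<close> \<open>k' \<le> k\<close> unfolding P_def by force
  qed
  moreover have "finite (\<Union>r'\<in>R. \<Union>k'\<in>{k'. k' \<le> k \<and> D r' k' \<noteq> 0}. P r' k')"
    unfolding R_def P_def using \<open>0 < r\<close>
    by (intro finite_UN_I finite_wranks_bounded finite_bounded_arith_progression) auto
  ultimately show ?thesis
    by (rule finite_subset)
qed

lemma critical_value_of_subsystem:
  assumes "coh_sys_data gam w chi r d k ri S" and "(r', d', k') \<in> S"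
    and "r * real k' \<noteq> r' * real k"
    and "0 < (r * d' - r' * d) / (r' * real k - r * real k')"
  shows "critical_value gam w chi r d k ((r * d' - r' * d) / (r' * real k - r * real k'))"
proof -
  obtain ri' where "\<forall>i<gam. ri' i \<le> ri i" "r' = wrank gam w ri'"
    "d' + r' * of_int chi \<in> \<int>" "k' \<le> k"
    using assms(1,2) unfolding coh_sys_data_def subsystem_type_ok_def by fastforce
  with assms show ?thesis
    unfolding critical_value_def coh_sys_data_def by blast
qed

lemma stable_alpha_constant_between_critical_values:
  assumes w_pos: "\<forall>i<gam. 0 < w i" and "0 < r"
    and sys: "coh_sys_data gam w chi r d k ri S"
    and "0 < \<alpha>1" and "\<alpha>1 \<le> \<alpha>2"
    and no_crit: "\<forall>\<beta>\<in>{\<alpha>1..\<alpha>2}. \<not> critical_value gam w chi r d k \<beta>"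
  shows "stable_alpha r d k S \<alpha>1 \<longleftrightarrow> stable_alpha r d k S \<alpha>2"
proof -
  have "mu_alpha r' d' k' \<alpha>1 < mu_alpha r d k \<alpha>1 \<longleftrightarrow> mu_alpha r' d' k' \<alpha>2 < mu_alpha r d k \<alpha>2"
    if sub: "(r', d', k') \<in> S" for r' d' k'
  proof (rule ccontr)
    assume change: "\<not> ?thesis"
    obtain ri' i where "i < gam" "0 < ri' i" "r' = wrank gam w ri'"
      using sys sub unfolding coh_sys_data_def subsystem_type_ok_def by fastforce
    then have "0 < r'"
      using wrank_pos[OF w_pos] by blast
    define a where "a = r' * d - r * d'"
    define b where "b = r' * real k - r * real k'"
    have "(0 < a + \<alpha>1 * b) \<noteq> (0 < a + \<alpha>2 * b)"
      using change mu_alpha_less_iff[OF \<open>0 < r\<close> \<open>0 < r'\<close>] unfolding a_def b_def by blast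
    then have "b \<noteq> 0" and root: "- a / b \<in> {\<alpha>1..\<alpha>2}"
      using affine_sign_change_root \<open>\<alpha>1 \<le> \<alpha>2\<close> by blast+
    have "- a / b = (r * d' - r' * d) / (r' * real k - r * real k')"
      unfolding a_def b_def by simp
    moreover have "r * real k' \<noteq> r' * real k"
      using \<open>b \<noteq> 0\<close> unfolding b_def by simp
    ultimately have "critical_value gam w chi r d k (- a / b)"
      using critical_value_of_subsystem[OF sys sub] root \<open>0 < \<alpha>1\<close> by simp
    with root no_crit show False
      by blast
  qed
  then show ?thesis
    unfolding stable_alpha_def by auto
qed

theorem lemma3p1:
  fixes gam :: nat and w :: "nat \<Rightarrow> real" and chi :: int
    and r d :: real and k :: nat and M :: real
  assumes "polarization gam w"
    and "r \<in> \<rat>" and "d \<in> \<rat>" and "r > 0"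
    and "real k < r"
    and "M > 0"
  shows "finite {\<alpha>. critical_value gam w chi r d k \<alpha> \<and> \<alpha> < M} \<and>
    (\<forall>\<alpha>1 \<alpha>2. 0 < \<alpha>1 \<longrightarrow> \<alpha>1 \<le> \<alpha>2 \<longrightarrow> \<alpha>2 < M \<longrightarrow>
       (\<forall>\<beta>\<in>{\<alpha>1..\<alpha>2}. \<not> critical_value gam w chi r d k \<beta>) \<longrightarrow>
       (\<forall>ri S. coh_sys_data gam w chi r d k ri S \<longrightarrow>
          (stable_alpha r d k S \<alpha>1 \<longleftrightarrow> stable_alpha r d k S \<alpha>2)))"
proof -
  have w_pos: "\<forall>i<gam. 0 < w i"
    using \<open>polarization gam w\<close> unfolding polarization_def by blast
  show ?thesis
    using finite_critical_values_below[OF w_pos \<open>r > 0\<close>]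
      stable_alpha_constant_between_critical_values[OF w_pos \<open>r > 0\<close>]
    by blast
qed

end
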